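(* Let $c>0$, $m=\log_2 c$ and $r\ge 0$. Then the covering map $F:H^3_1(c/4)\to T^1\mathbb{H}^2(c)$ defined in the context is an isometric immersion. Here $H^3_1(c/4)$ carries the Lorentzian metric induced from $\mathbb{R}^4_2$, and $T^1\mathbb{H}^2(c)$ carries the metric induced by the indefinite generalized Cheeger–Gromoll metric $h_{m,r}$ on $T\mathbb{H}^2(c)$. That is, $F^*(h_{m,r}|_{T^1\mathbb{H}^2(c)})$ equals the canonical metric of $H^3_1(c/4)$.
   Context: $\mathbb{R}^n_\nu$ denotes $\mathbb{R}^n$ with the metric $\langle x,y\rangle=\sum_{i=1}^{n-\nu}x^iy^i-\sum_{j=n-\nu+1}^nx^jy^j$. The anti-de Sitter space is $H^3_1(c)=\{x\in\mathbb{R}^4_2:(x^1)^2+(x^2)^2-(x^3)^2-(x^4)^2=-1/c\}$ with the induced metric. Write $z_1=x^1+\sqrt{-1}x^2$, $z_2=x^3+\sqrt{-1}x^4$, so that $|z_1|^2-|z_2|^2=-1/c$ on $H^3_1(c)$. On $H^3_1(1)$ define the vector fields - $X_1(x)=(x^4,x^3,x^2,x^1)$, - $X_2(x)=(x^3,-x^4,x^1,-x^2)$, - $X_3(x)=(-x^2,x^1,-x^4,x^3)$. The hyperbolic plane is $\mathbb{H}^2(c)=\{x\in\mathbb{R}^3_1:(x^1)^2+(x^2)^2-(x^3)^2=-1/c,\ x^3>0\}$ with the induced Riemannian metric. Its unit tangent bundle is $T^1\mathbb{H}^2(c)=\{(p,v)\in\mathbb{R}^3_1\times\mathbb{R}^3_1: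 p\in\mathbb{H}^2(c),\ \langle v,v\rangle=1,\ \langle p,v\rangle=0\}$, with projection $\pi(p,v)=p$. For $x\in H^3_1(1)$ let $A_x=\sqrt{-1}\begin{pmatrix}\bar z_2&-z_1\\ \bar z_1&-z_2\end{pmatrix}\in\mathrm{SU}(1,1)$. Let $e_1=\begin{pmatrix}0&-\sqrt{-1}\\ \sqrt{-1}&0\end{pmatrix}$, $e_2=\begin{pmatrix}0&1\\1&0\end{pmatrix}$, $e_3=\begin{pmatrix}\sqrt{-1}&0\\0&-\sqrt{-1}\end{pmatrix}$. These form a pseudo-orthonormal basis of $\mathfrak{su}(1,1)$ for $\langle X,Y\rangle=\tfrac12\mathrm{Tr}(XY)$, with $\langle e_3,e_3\rangle=-1$. Identify $\mathfrak{su}(1,1)$ with $\mathbb{R}^3_1$ via coordinates in this basis. Then - $A_xe_1A_x^{-1}=(-\mathrm{Re}(z_1^2+\bar z_2^2),\ -\mathrm{Im}(z_1^2+\bar z_2^2),\ -2\mathrm{Re}(z_1z_2))$, - $A_xe_2A_x^{-1}=(-\mathrm{Im}(z_1^2-\bar z_2^2),\ \mathrm{Re}(z_1^2-\bar z_2^2),\ -2\mathrm{Im}(z_1z_2))$, - $A_xe_3A_x^{-1}=(2\mathrm{Re}(z_1\bar z_2),\ 2\mathrm{Im}(z_1\bar z_2),\ |z_1|^2+|z_2|^2)$. The map $F:H^3_1(c/4)\to T^1\mathbb{H}^2(c)$ is $$F(2x/\sqrt c)=\big(\tfrac1{\sqrt c}A_xe_3A_x^{-1},\ A_xe_1A_x^{-1}\big),\qquad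 x\in H^3_1(1),$$ i.e. the composition of the homothety $2x/\sqrt c\mapsto x$, the map $x\mapsto A_x$, the adjoint representation $\rho:\mathrm{SU}(1,1)\to\mathrm{SO}^+(1,2)$, and $(c_1\,c_2\,c_3)\mapsto(c_3/\sqrt c,c_1)$. Lifts: $T\mathbb{H}^2(c)\subset\mathbb{R}^3_1\times\mathbb{R}^3_1$. For $(p,e)\in T\mathbb{H}^2(c)$ and $X\in T_p\mathbb{H}^2(c)$: - the vertical lift $X^v$ is the velocity at $0$ of $t\mapsto(p,e+tX)$; - the horizontal lift $X^h$ is the velocity at $0$ of $t\mapsto(\gamma(t),V(t))$, where $\gamma(0)=p$, $\dot\gamma(0)=X$, and $V$ is Levi-Civita parallel along $\gamma$ with $V(0)=e$. Indefinite generalized Cheeger–Gromoll metric: for $m\in\mathbb{R}$ and $r\ge0$, $h_{m,r}$ on $T\mathbb{H}^2(c)$ is given at $(p,e)$ by - $h_{m,r}(X^h,Y^h)=\langle X,Y\rangle$, - $h_{m,r}(X^h,Y^v)=0$, - $h_{m,r}(X^v,Y^v)=-\omega^m(\langle X,Y\rangle+r\langle X,e\rangle\langle Y,e\rangle)$, where $\omega=1/(1+\langle e,e\rangle)$. *)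

theory Defs
  imports "HOL-Analysis.Analysis"
begin

definition mink4 :: "real^4 \<Rightarrow> real^4 \<Rightarrow> real" where
  "mink4 x y = x$1 * y$1 + x$2 * y$2 - x$3 * y$3 - x$4 * y$4"

definition mink3 :: "real^3 \<Rightarrow> real^3 \<Rightarrow> real" where
  "mink3 x y = x$1 * y$1 + x$2 * y$2 - x$3 * y$3"

definition AdS :: "real \<Rightarrow> (real^4) set" where
  "AdS c = {x. mink4 x x = - 1 / c}"

definition TanAdS :: "real^4 \<Rightarrow> (real^4) set" where
  "TanAdS y = {W. mink4 y W = 0}"

definition H2 :: "real \<Rightarrow> (real^3) set" where
  "H2 c = {p. mink3 p p = - 1 / c \<and> p$3 > 0}"

definition T1H2 :: "real \<Rightarrow> ((real^3) \<times> (real^3)) set" where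
  "T1H2 c = {(p, v). p \<in> H2 c \<and> mink3 v v = 1 \<and> mink3 p v = 0}"

definition z1 :: "real^4 \<Rightarrow> complex" where "z1 x = Complex (x$1) (x$2)"
definition z2 :: "real^4 \<Rightarrow> complex" where "z2 x = Complex (x$3) (x$4)"

text \<open>Coordinates of A_x e_1 A_x^{-1} and A_x e_3 A_x^{-1} in the basis e_1,e_2,e_3.\<close>
definition rho1 :: "real^4 \<Rightarrow> real^3" where
  "rho1 x = vector [- Re ((z1 x)\<^sup>2 + (cnj (z2 x))\<^sup>2),
                    - Im ((z1 x)\<^sup>2 + (cnj (z2 x))\<^sup>2),
                    - 2 * Re (z1 x * z2 x)]"

definition rho3 :: "real^4 \<Rightarrow> real^3" where
  "rho3 x = vector [2 * Re (z1 x * cnj (z2 x)),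
                    2 * Im (z1 x * cnj (z2 x)),
                    (cmod (z1 x))\<^sup>2 + (cmod (z2 x))\<^sup>2]"

text \<open>F(2x/sqrt c) = (A_x e_3 A_x^{-1} / sqrt c, A_x e_1 A_x^{-1}); written as a
  (polynomial) map on all of R^4, evaluated at y = 2x/sqrt c.\<close>
definition Fmap :: "real \<Rightarrow> real^4 \<Rightarrow> (real^3) \<times> (real^3)" where
  "Fmap c y = (let x = (sqrt c / 2) *\<^sub>R y in ((1 / sqrt c) *\<^sub>R rho3 x, rho1 x))"

text \<open>Tangential projection onto T_p H^2(c) (normal direction p, <p,p> = -1/c).\<close>
definition tanproj :: "real \<Rightarrow> real^3 \<Rightarrow> real^3 \<Rightarrow> real^3" where
  "tanproj c p Z = Z + (c * mink3 Z p) *\<^sub>R p"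

text \<open>Z is the horizontal lift X^h at (p,e): velocity at 0 of (gamma, V) where gamma is a
  curve in H^2(c) with gamma(0)=p, gamma'(0)=X, and V is a vector field tangent to H^2(c)
  along gamma, Levi-Civita parallel (tangential part of V' vanishes), V(0)=e.\<close>
definition hlift :: "real \<Rightarrow> real^3 \<Rightarrow> real^3 \<Rightarrow> real^3 \<Rightarrow> (real^3) \<times> (real^3) \<Rightarrow> bool" where
  "hlift c p e X Z \<longleftrightarrow>
     (\<exists>(\<gamma>::real \<Rightarrow> real^3) (V::real \<Rightarrow> real^3) \<epsilon>. \<epsilon> > 0 \<and> \<gamma> 0 = p \<and> V 0 = e \<and>
        (\<forall>t\<in>{-\<epsilon><..<\<epsilon>}. \<gamma> t \<in> H2 c \<and> mink3 (\<gamma> t) (V t) = 0 \<and>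
            \<gamma> differentiable (at t) \<and> V differentiable (at t) \<and>
            tanproj c (\<gamma> t) (vector_derivative V (at t)) = 0) \<and>
        vector_derivative \<gamma> (at 0) = X \<and>
        Z = (X, vector_derivative V (at 0)))"

text \<open>The vertical lift Y^v at (p,e) is the velocity of t \<mapsto> (p, e + tY), i.e. (0,Y).\<close>
definition vlift :: "real^3 \<Rightarrow> (real^3) \<times> (real^3)" where
  "vlift Y = (0, Y)"

definition hv_decomp :: "real \<Rightarrow> real^3 \<Rightarrow> real^3 \<Rightarrow> (real^3) \<times> (real^3) \<Rightarrow> real^3 \<Rightarrow> real^3 \<Rightarrow> bool" where
  "hv_decomp c p e Z X Y \<longleftrightarrow>
     mink3 p Y = 0 \<and> (\<exists>H. hlift c p e X H \<and> Z = H + vlift Y)"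

definition hmr_form :: "real \<Rightarrow> real \<Rightarrow> real^3 \<Rightarrow> real^3 \<Rightarrow> real^3 \<Rightarrow> real^3 \<Rightarrow> real^3 \<Rightarrow> real" where
  "hmr_form m r e X1 Y1 X2 Y2 =
     mink3 X1 X2 - (1 / (1 + mink3 e e)) powr m *
        (mink3 Y1 Y2 + r * mink3 Y1 e * mink3 Y2 e)"

definition hmr_value :: "real \<Rightarrow> real \<Rightarrow> real \<Rightarrow> (real^3) \<times> (real^3) \<Rightarrow>
    (real^3) \<times> (real^3) \<Rightarrow> (real^3) \<times> (real^3) \<Rightarrow> real \<Rightarrow> bool" where
  "hmr_value c m r pe Z1 Z2 v \<longleftrightarrow>
     (let p = fst pe; e = snd pe in
       (\<exists>X1 Y1 X2 Y2. hv_decomp c p e Z1 X1 Y1 \<and> hv_decomp c p e Z2 X2 Y2) \<and>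
       (\<forall>X1 Y1 X2 Y2. hv_decomp c p e Z1 X1 Y1 \<and> hv_decomp c p e Z2 X2 Y2 \<longrightarrow>
           v = hmr_form m r e X1 Y1 X2 Y2))"

end

theory Submission
  imports Defs
begin

text \<open>
  On the hyperbolic side we determine horizontal lifts completely: at (p,e) the
  horizontal lift of X is (X, c<X,e> p).  Uniqueness comes from differentiating the
  constraint <gamma,V> = 0; existence from an explicit reparametrised geodesic through p
  with a field along it whose derivative is normal.  Consequently a vector (X,E) tangent to
  T^1 H^2(c) splits uniquely as X^h + Y^v with Y = E - c<X,e> p, and on such vectors
  h_{m,r} reduces to an explicit form T1H2_metric (the r-term vanishes and omega^m = 1/c).
  On the anti-de Sitter side, F is a quadratic polynomial map; a handful of polynomial
  identities show that F lands in T^1 H^2(c), that its differential lands in the tangent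
  spaces, and that the pullback of T1H2_metric is the Lorentzian metric.  Injectivity of the
  differential on T_y H^3_1 then follows from nondegeneracy of the metric there.
\<close>

section \<open>Bilinear algebra of the pseudo-Euclidean forms\<close>

lemma mink3_scaleR_left [simp]: "mink3 (a *\<^sub>R u) v = a * mink3 u v"
  and mink3_scaleR_right [simp]: "mink3 u (a *\<^sub>R v) = a * mink3 u v"
  and mink3_add_left [simp]: "mink3 (u + w) v = mink3 u v + mink3 w v"
  and mink3_add_right [simp]: "mink3 u (v + w) = mink3 u v + mink3 u w"
  and mink3_diff_left [simp]: "mink3 (u - w) v = mink3 u v - mink3 w v"
  and mink3_diff_right [simp]: "mink3 u (v - w) = mink3 u v - mink3 u w"
  by (simp_all add: mink3_def algebra_simps)

lemma mink3_sym: "mink3 u v = mink3 v u"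
  by (simp add: mink3_def algebra_simps)

lemma mink4_scaleR_right [simp]: "mink4 u (a *\<^sub>R v) = a * mink4 u v"
  and mink4_diff_left [simp]: "mink4 (u - w) v = mink4 u v - mink4 w v"
  and mink4_diff_right [simp]: "mink4 u (v - w) = mink4 u v - mink4 u w"
  by (simp_all add: mink4_def algebra_simps)

lemma mink4_sym: "mink4 u v = mink4 v u"
  by (simp add: mink4_def algebra_simps)

text \<open>The form of R^4_2 is nondegenerate: pair d with d reflected in the negative directions.\<close>

lemma mink4_nondegenerate:
  assumes "\<And>v. mink4 d v = 0"
  shows "d = 0"
proof -
  define v :: "real^4" where "v = (\<chi> i. if i = 3 \<or> i = 4 then - d$i else d$i)"
  have "(d$1)^2 + (d$2)^2 + (d$3)^2 + (d$4)^2 = mink4 d v"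
    by (simp add: v_def mink4_def power2_eq_square)
  then have "(d$1)^2 + (d$2)^2 + (d$3)^2 + (d$4)^2 = 0" using assms by simp
  then show ?thesis
    by (simp add: vec_eq_iff forall_4 add_nonneg_eq_0_iff)
qed

text \<open>For a non-null y, R^4_2 is spanned by y and its orthogonal complement, so a vector
  orthogonal to both vanishes.\<close>

lemma mink4_orthogonal_complement:
  assumes y: "mink4 y y \<noteq> 0" and dy: "mink4 d y = 0"
    and perp: "\<And>w. mink4 y w = 0 \<Longrightarrow> mink4 d w = 0"
  shows "d = 0"
proof (rule mink4_nondegenerate)
  fix v
  define w where "w = v - (mink4 y v / mink4 y y) *\<^sub>R y"
  have "mink4 y w = 0" using y by (simp add: w_def)
  then have "mink4 d w = 0" by (rule perp)
  then show "mink4 d v = 0" by (simp add: w_def dy)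
qed

text \<open>A map on the tangent space T_y H^3_1 that pulls some form B back to the (nondegenerate)
  Lorentzian metric is injective.  This gives the immersion property of F.\<close>

lemma inj_on_if_pullback:
  assumes y: "mink4 y y \<noteq> 0"
    and pull: "\<And>w1 w2. w1 \<in> TanAdS y \<Longrightarrow> w2 \<in> TanAdS y \<Longrightarrow> mink4 w1 w2 = B (D w1) (D w2)"
  shows "inj_on D (TanAdS y)"
proof (rule inj_onI)
  fix w1 w2 assume w1: "w1 \<in> TanAdS y" and w2: "w2 \<in> TanAdS y" and eq: "D w1 = D w2"
  have "w1 - w2 = 0"
  proof (rule mink4_orthogonal_complement[OF y])
    show "mink4 (w1 - w2) y = 0" using w1 w2 by (simp add: TanAdS_def mink4_sym)
    show "mink4 (w1 - w2) w = 0" if "mink4 y w = 0" for w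
      using pull[OF w1, of w] pull[OF w2, of w] eq that by (simp add: TanAdS_def)
  qed
  then show "w1 = w2" by simp
qed

section \<open>Horizontal lifts on the hyperbolic plane\<close>

text \<open>An explicit curve in H^2(c) through p with velocity X (a geodesic, reparametrised so
  that only rational functions of t occur), and a field along it
  starting at e whose derivative is a multiple of the curve itself, i.e. normal to H^2(c).
  Here K = c<X,X>/4 and b = c<e,X>.\<close>

definition lift_curve :: "real \<Rightarrow> real^3 \<Rightarrow> real^3 \<Rightarrow> real \<Rightarrow> real^3" where
  "lift_curve K p X t = ((1 + K*t*t) / (1 - K*t*t)) *\<^sub>R p + (t / (1 - K*t*t)) *\<^sub>R X"

definition lift_field :: "real \<Rightarrow> real \<Rightarrow> real^3 \<Rightarrow> real^3 \<Rightarrow> real^3 \<Rightarrow> real \<Rightarrow> real^3" where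
  "lift_field K b p X e t =
     e + (b * (t / (1 - K*t*t))) *\<^sub>R p + (b / 2 * (t*t / (1 - K*t*t))) *\<^sub>R X"

lemma lift_coefficient_derivatives:
  fixes K t :: real
  assumes D: "1 - K*t*t \<noteq> 0"
  shows "((\<lambda>t. (1 + K*t*t) / (1 - K*t*t)) has_real_derivative 4*K*t / (1 - K*t*t)^2) (at t)"
    and "((\<lambda>t. t / (1 - K*t*t)) has_real_derivative (1 + K*t*t) / (1 - K*t*t)^2) (at t)"
    and "((\<lambda>t. t*t / (1 - K*t*t)) has_real_derivative 2*t / (1 - K*t*t)^2) (at t)"
proof -
  have D': "K*t*t \<noteq> 1" "K*(t*t) \<noteq> 1" "(1 - K*t*t) * (1 - K*t*t) \<noteq> 0"
    using D by (simp_all add: mult.assoc)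
  show "((\<lambda>t. (1 + K*t*t) / (1 - K*t*t)) has_real_derivative 4*K*t / (1 - K*t*t)^2) (at t)"
    and "((\<lambda>t. t / (1 - K*t*t)) has_real_derivative (1 + K*t*t) / (1 - K*t*t)^2) (at t)"
    and "((\<lambda>t. t*t / (1 - K*t*t)) has_real_derivative 2*t / (1 - K*t*t)^2) (at t)"
    by (rule DERIV_cong, rule DERIV_divide,
        auto intro!: derivative_eq_intros simp: D D' field_simps power2_eq_square)+
qed

lemma scaleR_const_has_vector_derivative:
  "(g has_real_derivative g') (at t) \<Longrightarrow>
     ((\<lambda>t. g t *\<^sub>R (v::'a::real_normed_vector)) has_vector_derivative g' *\<^sub>R v) (at t)"
  using has_vector_derivative_scaleR[OF _ has_vector_derivative_const, of g g' t UNIV v] by simp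

lemma lift_curve_derivative:
  assumes D: "1 - K*t*t \<noteq> 0"
  shows "(lift_curve K p X has_vector_derivative
           (4*K*t / (1 - K*t*t)^2) *\<^sub>R p + ((1 + K*t*t) / (1 - K*t*t)^2) *\<^sub>R X) (at t)"
  unfolding lift_curve_def
  by (intro has_vector_derivative_add scaleR_const_has_vector_derivative
        lift_coefficient_derivatives[OF D])

text \<open>The derivative of the lift field is normal to the hyperboloid: parallel transport.\<close>

lemma lift_field_derivative:
  assumes D: "1 - K*t*t \<noteq> 0"
  shows "(lift_field K b p X e has_vector_derivative (b / (1 - K*t*t)) *\<^sub>R lift_curve K p X t) (at t)"
proof -
  have "(lift_field K b p X e has_vector_derivative
          0 + (b * ((1 + K*t*t) / (1 - K*t*t)^2)) *\<^sub>R p + (b / 2 * (2*t / (1 - K*t*t)^2)) *\<^sub>R X) (at t)"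
    unfolding lift_field_def
    by (intro has_vector_derivative_add has_vector_derivative_const scaleR_const_has_vector_derivative
          DERIV_cmult lift_coefficient_derivatives[OF D])
  then show ?thesis
    using D by (simp add: lift_curve_def scaleR_add_right power2_eq_square)
qed

lemma lift_curve_on_hyperboloid:
  assumes c: "c > 0" and pp: "mink3 p p = -1/c" and pX: "mink3 p X = 0"
    and K: "K = c * mink3 X X / 4" and D: "1 - K*t*t \<noteq> 0"
  shows "mink3 (lift_curve K p X t) (lift_curve K p X t) = -1/c"
proof -
  define d where "d = 1 - K*t*t"
  have d: "d \<noteq> 0" and c0: "c \<noteq> 0" using D c by (simp_all add: d_def)
  have XX: "mink3 X X = 4*K/c" using c K by (simp add: field_simps)
  have num: "4*K*t*t - (1 + K*t*t)^2 = -(d^2)"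
    by (simp add: d_def power2_eq_square algebra_simps)
  have "mink3 (lift_curve K p X t) (lift_curve K p X t) = (4*K*t*t - (1 + K*t*t)^2) / (c * d^2)"
    unfolding lift_curve_def d_def[symmetric]
    using c0 d by (simp add: pp pX mink3_sym[of X p] XX field_simps power2_eq_square)
  then show ?thesis using c0 d by (simp add: num)
qed

lemma lift_field_orthogonal:
  assumes c: "c > 0" and pp: "mink3 p p = -1/c" and pX: "mink3 p X = 0" and pe: "mink3 p e = 0"
    and K: "K = c * mink3 X X / 4" and b: "b = c * mink3 e X" and D: "1 - K*t*t \<noteq> 0"
  shows "mink3 (lift_curve K p X t) (lift_field K b p X e t) = 0"
proof -
  define d where "d = 1 - K*t*t"
  have d: "d \<noteq> 0" and c0: "c \<noteq> 0" using D c by (simp_all add: d_def)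
  have XX: "mink3 X X = 4*K/c" and Xe: "mink3 X e = b/c"
    using c K b by (simp_all add: field_simps mink3_sym)
  have "mink3 (lift_curve K p X t) (lift_field K b p X e t) = b * t * (d - 1 + K*t*t) / (c * d^2)"
    unfolding lift_curve_def lift_field_def d_def[symmetric]
    using c0 d by (simp add: pp pX pe mink3_sym[of X p] XX Xe field_simps power2_eq_square)
  then show ?thesis by (simp add: d_def)
qed

lemma lift_curve_near_zero:
  assumes p3: "p$3 > 0"
  obtains \<epsilon> :: real where "\<epsilon> > 0"
    and "\<And>t. t \<in> {-\<epsilon><..<\<epsilon>} \<Longrightarrow> 1 - K*t*t > 0 \<and> lift_curve K p X t $ 3 > 0"
proof -
  have coord: "lift_curve K p X t $ 3 = ((1 + K*t*t) * p$3 + t * X$3) / (1 - K*t*t)" for t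
    by (simp add: lift_curve_def add_divide_distrib[symmetric] times_divide_eq_left)
  have "isCont (\<lambda>t. 1 - K*t*t) 0" "isCont (\<lambda>t. lift_curve K p X t $ 3) 0"
    unfolding coord by (intro continuous_intros; simp)+
  then have lim: "(\<lambda>t. 1 - K*t*t) \<midarrow>0\<rightarrow> 1" "(\<lambda>t. lift_curve K p X t $ 3) \<midarrow>0\<rightarrow> p$3"
    by (simp_all add: isCont_def coord)
  have "eventually (\<lambda>t. 1 - K*t*t > 0 \<and> lift_curve K p X t $ 3 > 0) (at 0)"
    using order_tendstoD(1)[OF lim(1), of 0] order_tendstoD(1)[OF lim(2), of 0] p3
    by (auto intro: eventually_conj)
  then have "eventually (\<lambda>t. 1 - K*t*t > 0 \<and> lift_curve K p X t $ 3 > 0) (nhds 0)"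
    using p3 by (simp add: eventually_nhds_conv_at coord)
  then obtain \<epsilon> where "\<epsilon> > 0" "\<And>t. dist t 0 < \<epsilon> \<Longrightarrow> 1 - K*t*t > 0 \<and> lift_curve K p X t $ 3 > 0"
    unfolding eventually_nhds_metric by blast
  moreover have "dist t 0 < \<epsilon>" if "t \<in> {-\<epsilon><..<\<epsilon>}" for t
    using that by (simp add: dist_real_def abs_less_iff)
  ultimately show ?thesis
    using that by blast
qed

lemma hlift_exists:
  assumes c: "c > 0" and p: "p \<in> H2 c" and pe: "mink3 p e = 0" and pX: "mink3 p X = 0"
  shows "hlift c p e X (X, (c * mink3 X e) *\<^sub>R p)"
proof -
  define K where "K = c * mink3 X X / 4"
  define b where "b = c * mink3 e X"
  let ?\<gamma> = "lift_curve K p X" and ?V = "lift_field K b p X e"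
  have pp: "mink3 p p = -1/c" and p3: "p$3 > 0" using p by (auto simp: H2_def)
  obtain \<epsilon> :: real where \<epsilon>: "\<epsilon> > 0"
    and near: "\<And>t. t \<in> {-\<epsilon><..<\<epsilon>} \<Longrightarrow> 1 - K*t*t > 0 \<and> ?\<gamma> t $ 3 > 0"
    using lift_curve_near_zero[OF p3] by blast
  have along: "?\<gamma> t \<in> H2 c \<and> mink3 (?\<gamma> t) (?V t) = 0 \<and>
      ?\<gamma> differentiable (at t) \<and> ?V differentiable (at t) \<and>
      tanproj c (?\<gamma> t) (vector_derivative ?V (at t)) = 0"
    if t: "t \<in> {-\<epsilon><..<\<epsilon>}" for t
  proof -
    have D: "1 - K*t*t \<noteq> 0" using near[OF t] by simp
    have on: "mink3 (?\<gamma> t) (?\<gamma> t) = -1/c"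
      by (rule lift_curve_on_hyperboloid[OF c pp pX K_def D])
    have "vector_derivative ?V (at t) = (b / (1 - K*t*t)) *\<^sub>R ?\<gamma> t"
      by (rule vector_derivative_at[OF lift_field_derivative[OF D]])
    then have "tanproj c (?\<gamma> t) (vector_derivative ?V (at t)) = 0"
      using c by (simp add: tanproj_def on)
    then show ?thesis
      using near[OF t] on lift_field_orthogonal[OF c pp pX pe K_def b_def D]
        differentiableI_vector[OF lift_curve_derivative[OF D]]
        differentiableI_vector[OF lift_field_derivative[OF D]]
      by (simp add: H2_def)
  qed
  have "vector_derivative ?\<gamma> (at 0) = X"
    using vector_derivative_at[OF lift_curve_derivative[of K 0]] by simp
  moreover have "vector_derivative ?V (at 0) = (c * mink3 X e) *\<^sub>R p"
    using vector_derivative_at[OF lift_field_derivative[of K 0]]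
    by (simp add: lift_curve_def b_def mink3_sym)
  moreover have "?\<gamma> 0 = p" "?V 0 = e"
    by (simp_all add: lift_curve_def lift_field_def)
  ultimately show ?thesis
    unfolding hlift_def using \<epsilon> along by (intro exI[of _ ?\<gamma>] exI[of _ ?V] exI[of _ \<epsilon>]) auto
qed

lemma has_vector_derivative_component:
  assumes "(f has_vector_derivative f') F"
  shows "((\<lambda>t. f t $ i) has_real_derivative f' $ i) F"
proof -
  have "((\<lambda>t. f t $ i) has_derivative (\<lambda>h. h * f' $ i)) F"
    using bounded_linear.has_derivative[OF bounded_linear_vec_nth assms[unfolded has_vector_derivative_def]]
    by simp
  moreover have "(\<lambda>h. h * f' $ i) = (*) (f' $ i)" by (auto simp: fun_eq_iff)
  ultimately show ?thesis by (simp add: has_field_derivative_def)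
qed

lemma mink3_has_derivative:
  assumes "(f has_vector_derivative f') (at t)" "(g has_vector_derivative g') (at t)"
  shows "((\<lambda>t. mink3 (f t) (g t)) has_real_derivative mink3 f' (g t) + mink3 (f t) g') (at t)"
  unfolding mink3_def
  by (rule DERIV_cong, (rule derivative_intros has_vector_derivative_component assms)+)
     (simp add: algebra_simps)

text \<open>Uniqueness: every horizontal lift of X at (p,e) is (X, c<X,e> p).  Differentiating
  <gamma,V> = 0 gives the normal component of V'(0), and parallelism kills the tangential one.\<close>

lemma hlift_unique:
  assumes "hlift c p e X H"
  shows "H = (X, (c * mink3 X e) *\<^sub>R p)"
proof -
  obtain \<gamma> V and \<epsilon> :: real where \<epsilon>: "\<epsilon> > 0" and \<gamma>0: "\<gamma> 0 = p" and V0: "V 0 = e"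
    and along: "\<forall>t\<in>{-\<epsilon><..<\<epsilon>}. \<gamma> t \<in> H2 c \<and> mink3 (\<gamma> t) (V t) = 0 \<and>
            \<gamma> differentiable (at t) \<and> V differentiable (at t) \<and>
            tanproj c (\<gamma> t) (vector_derivative V (at t)) = 0"
    and \<gamma>X: "vector_derivative \<gamma> (at 0) = X"
    and H: "H = (X, vector_derivative V (at 0))"
    using assms unfolding hlift_def by blast
  define W where "W = vector_derivative V (at 0)"
  have zero: "(0::real) \<in> {-\<epsilon><..<\<epsilon>}" using \<epsilon> by simp
  have d\<gamma>: "(\<gamma> has_vector_derivative X) (at 0)" and dV: "(V has_vector_derivative W) (at 0)"
    using along zero \<gamma>X W_def vector_derivative_works by blast+
  have "((\<lambda>t. mink3 (\<gamma> t) (V t)) has_real_derivative mink3 X e + mink3 p W) (at 0)"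
    using mink3_has_derivative[OF d\<gamma> dV] \<gamma>0 V0 by simp
  moreover have "((\<lambda>t. mink3 (\<gamma> t) (V t)) has_real_derivative 0) (at 0)"
    by (rule has_field_derivative_transform_within_open[of "\<lambda>t. 0" 0 0 "{-\<epsilon><..<\<epsilon>}"])
       (use along zero in auto)
  ultimately have normal: "mink3 W p = - mink3 X e"
    using DERIV_unique mink3_sym[of W p] by fastforce
  have "tanproj c p W = 0" using along zero \<gamma>0 W_def by auto
  then have "W = - (c * mink3 W p) *\<^sub>R p"
    unfolding tanproj_def by (simp add: eq_neg_iff_add_eq_0)
  then show ?thesis using H W_def normal by simp
qed

lemma hv_decomp_iff:
  assumes c: "c > 0" and p: "p \<in> H2 c" and pe: "mink3 p e = 0"
    and pX: "mink3 p X = 0" and pE: "mink3 p E + mink3 X e = 0"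
  shows "hv_decomp c p e (X, E) X' Y \<longleftrightarrow> X' = X \<and> Y = E - (c * mink3 X e) *\<^sub>R p"
proof
  assume "hv_decomp c p e (X, E) X' Y"
  then obtain H where H: "hlift c p e X' H" and split: "(X, E) = H + vlift Y"
    unfolding hv_decomp_def by blast
  from split have "X = X'" and "E = (c * mink3 X' e) *\<^sub>R p + Y"
    unfolding hlift_unique[OF H] vlift_def by simp_all
  then show "X' = X \<and> Y = E - (c * mink3 X e) *\<^sub>R p" by simp
next
  assume XY: "X' = X \<and> Y = E - (c * mink3 X e) *\<^sub>R p"
  have "mink3 p p = -1/c" using p by (simp add: H2_def)
  then have "mink3 p Y = 0" using c pE XY by simp
  moreover have "(X, E) = (X, (c * mink3 X e) *\<^sub>R p) + vlift Y"
    using XY by (simp add: vlift_def)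
  ultimately show "hv_decomp c p e (X, E) X' Y"
    unfolding hv_decomp_def using hlift_exists[OF c p pe pX] XY by blast
qed

section \<open>The metric h_{m,r} on the unit tangent bundle\<close>

text \<open>The tangent vectors of T^1 H^2(c) at (p,e): the linearisations of <p,p> = -1/c,
  <p,e> = 0 and <e,e> = 1.\<close>

definition T1H2_tangent :: "real^3 \<Rightarrow> real^3 \<Rightarrow> (real^3) \<times> (real^3) \<Rightarrow> bool" where
  "T1H2_tangent p e Z \<longleftrightarrow>
     mink3 p (fst Z) = 0 \<and> mink3 p (snd Z) + mink3 (fst Z) e = 0 \<and> mink3 (snd Z) e = 0"

text \<open>The explicit form that h_{log_2 c, r} takes on such vectors.\<close>

definition T1H2_metric :: "real \<Rightarrow> real^3 \<Rightarrow> (real^3) \<times> (real^3) \<Rightarrow> (real^3) \<times> (real^3) \<Rightarrow> real" where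
  "T1H2_metric c e Z1 Z2 = mink3 (fst Z1) (fst Z2)
     - (mink3 (snd Z1) (snd Z2) + c * mink3 (fst Z1) e * mink3 (fst Z2) e) / c"

text \<open>On the unit tangent bundle the vertical parts are orthogonal to e, so the r-term drops
  out, and omega = 1/2 so that omega^m = 1/c for m = log_2 c.\<close>

lemma hmr_value_T1H2:
  assumes c: "c > 0" and pe: "(p, e) \<in> T1H2 c"
    and Z1: "T1H2_tangent p e Z1" and Z2: "T1H2_tangent p e Z2"
  shows "hmr_value c (log 2 c) r (p, e) Z1 Z2 (T1H2_metric c e Z1 Z2)"
proof -
  obtain X1 E1 X2 E2 where Z: "Z1 = (X1, E1)" "Z2 = (X2, E2)" by fastforce
  have p: "p \<in> H2 c" and ee: "mink3 e e = 1" and pe0: "mink3 p e = 0"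
    and pp: "mink3 p p = -1/c"
    using pe by (auto simp: T1H2_def H2_def)
  have t1: "mink3 p X1 = 0" "mink3 p E1 + mink3 X1 e = 0" "mink3 E1 e = 0"
    and t2: "mink3 p X2 = 0" "mink3 p E2 + mink3 X2 e = 0" "mink3 E2 e = 0"
    using Z1 Z2 by (simp_all add: Z T1H2_tangent_def)
  define Y1 where "Y1 = E1 - (c * mink3 X1 e) *\<^sub>R p"
  define Y2 where "Y2 = E2 - (c * mink3 X2 e) *\<^sub>R p"
  note dec1 = hv_decomp_iff[OF c p pe0 t1(1,2)] and dec2 = hv_decomp_iff[OF c p pe0 t2(1,2)]
  have Ye: "mink3 Y1 e = 0" "mink3 Y2 e = 0"
    using t1 t2 pe0 by (simp_all add: Y1_def Y2_def)
  have pE: "mink3 p E1 = - mink3 X1 e" "mink3 p E2 = - mink3 X2 e"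
    using t1(2) t2(2) by linarith+
  have YY: "mink3 Y1 Y2 = mink3 E1 E2 + c * mink3 X1 e * mink3 X2 e"
    using c by (simp add: Y1_def Y2_def pp pE mink3_sym[of E1 p] algebra_simps)
  have \<omega>: "(1 / (1 + mink3 e e)) powr log 2 c = 1/c"
    using c by (simp add: ee powr_divide)
  have "hmr_form (log 2 c) r e X1 Y1 X2 Y2 = T1H2_metric c e Z1 Z2"
    by (simp add: hmr_form_def T1H2_metric_def Z Ye YY \<omega>)
  then show ?thesis
    unfolding hmr_value_def Let_def fst_conv snd_conv Z dec1 dec2 Y1_def[symmetric] Y2_def[symmetric]
    by auto
qed

section \<open>The map F as a quadratic polynomial map\<close>

text \<open>Up to the factors sqrt c/4 and c/4, the two components of F are quadratic polynomials
  in y = 2x/sqrt c; their differentials are base_quad_diff and fibre_quad_diff.\<close>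

definition base_quad :: "real^4 \<Rightarrow> real^3" where
  "base_quad y = vector [2 * (y$1*y$3 + y$2*y$4), 2 * (y$2*y$3 - y$1*y$4),
                         (y$1)^2 + (y$2)^2 + (y$3)^2 + (y$4)^2]"

definition fibre_quad :: "real^4 \<Rightarrow> real^3" where
  "fibre_quad y = vector [- ((y$1)^2 - (y$2)^2 + (y$3)^2 - (y$4)^2), -2 * (y$1*y$2 - y$3*y$4),
                          -2 * (y$1*y$3 - y$2*y$4)]"

definition base_quad_diff :: "real^4 \<Rightarrow> real^4 \<Rightarrow> real^3" where
  "base_quad_diff y w = vector [2 * (w$1*y$3 + y$1*w$3 + w$2*y$4 + y$2*w$4),
      2 * (w$2*y$3 + y$2*w$3 - w$1*y$4 - y$1*w$4), 2 * (y$1*w$1 + y$2*w$2 + y$3*w$3 + y$4*w$4)]"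

definition fibre_quad_diff :: "real^4 \<Rightarrow> real^4 \<Rightarrow> real^3" where
  "fibre_quad_diff y w = vector [-2 * (y$1*w$1 - y$2*w$2 + y$3*w$3 - y$4*w$4),
      -2 * (w$1*y$2 + y$1*w$2 - w$3*y$4 - y$3*w$4), -2 * (w$1*y$3 + y$1*w$3 - w$2*y$4 - y$2*w$4)]"

text \<open>The pairing <X_2(y), a> with the vector field X_2(x) = (x^3, -x^4, x^1, -x^2); it measures
  the component of a along the fibres of F.\<close>

definition fibre_pairing :: "real^4 \<Rightarrow> real^4 \<Rightarrow> real" where
  "fibre_pairing y a = y$3*a$1 - y$4*a$2 - y$1*a$3 + y$2*a$4"

lemma base_quad_square: "mink3 (base_quad y) (base_quad y) = -((mink4 y y)^2)"
  unfolding mink3_def mink4_def base_quad_def vector_3 power2_eq_square by algebra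

lemma fibre_quad_square: "mink3 (fibre_quad y) (fibre_quad y) = (mink4 y y)^2"
  unfolding mink3_def mink4_def fibre_quad_def vector_3 power2_eq_square by algebra

lemma base_fibre_orth: "mink3 (base_quad y) (fibre_quad y) = 0"
  unfolding mink3_def base_quad_def fibre_quad_def vector_3 power2_eq_square by algebra

lemma base_diff_base: "mink3 (base_quad y) (base_quad_diff y w) = -2 * mink4 y y * mink4 y w"
  unfolding mink3_def mink4_def base_quad_def base_quad_diff_def vector_3 power2_eq_square by algebra

lemma fibre_diff_fibre: "mink3 (fibre_quad_diff y w) (fibre_quad y) = 2 * mink4 y y * mink4 y w"
  unfolding mink3_def mink4_def fibre_quad_def fibre_quad_diff_def vector_3 power2_eq_square by algebra

lemma base_diff_fibre: "mink3 (base_quad_diff y w) (fibre_quad y) = 2 * mink4 y y * fibre_pairing y w"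
  unfolding mink3_def mink4_def fibre_pairing_def fibre_quad_def base_quad_diff_def vector_3
    power2_eq_square by algebra

lemma base_fibre_diff: "mink3 (base_quad y) (fibre_quad_diff y w) = -2 * mink4 y y * fibre_pairing y w"
  unfolding mink3_def mink4_def fibre_pairing_def base_quad_def fibre_quad_diff_def vector_3
    power2_eq_square by algebra

lemma diff_metric:
  "mink3 (base_quad_diff y a) (base_quad_diff y b) - mink3 (fibre_quad_diff y a) (fibre_quad_diff y b)
     = 4 * fibre_pairing y a * fibre_pairing y b - 4 * mink4 y a * mink4 y b - 4 * mink4 y y * mink4 a b"
  unfolding mink3_def mink4_def fibre_pairing_def base_quad_diff_def fibre_quad_diff_def vector_3
  by algebra

lemmas quad_identities = base_quad_square fibre_quad_square base_fibre_orth base_diff_base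
  fibre_diff_fibre base_diff_fibre base_fibre_diff

lemma vec3_eq_iff: "(v::real^3) = w \<longleftrightarrow> v$1 = w$1 \<and> v$2 = w$2 \<and> v$3 = w$3"
  by (auto simp: vec_eq_iff forall_3)

lemma Fmap_quadratic:
  assumes "c > 0"
  shows "Fmap c y = ((sqrt c / 4) *\<^sub>R base_quad y, (c / 4) *\<^sub>R fibre_quad y)"
proof -
  have cmod_sq: "cmod (Complex a b) * cmod (Complex a b) = a*a + b*b" for a b
    by (metis cmod_power2 complex.sel power2_eq_square)
  have ss: "sqrt c * (sqrt c * t) = c * t" for t
    using assms by (simp add: mult.assoc[symmetric])
  show ?thesis
    using assms unfolding Fmap_def Let_def rho1_def rho3_def base_quad_def fibre_quad_def z1_def z2_def
    by (simp add: vec3_eq_iff cmod_sq ss power2_eq_square field_simps)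
qed

lemma vector3_has_derivative:
  assumes "(f1 has_derivative f1') F" "(f2 has_derivative f2') F" "(f3 has_derivative f3') F"
  shows "((\<lambda>x. vector [f1 x, f2 x, f3 x] :: real^3) has_derivative (\<lambda>h. vector [f1' h, f2' h, f3' h])) F"
proof -
  define u1 u2 u3 :: "real^3"
    where "u1 = vector [1, 0, 0]" and "u2 = vector [0, 1, 0]" and "u3 = vector [0, 0, 1]"
  have split: "(vector [a, b, c] :: real^3) = a *\<^sub>R u1 + b *\<^sub>R u2 + c *\<^sub>R u3" for a b c
    by (simp add: vec3_eq_iff u1_def u2_def u3_def)
  show ?thesis
    unfolding split
    by (intro has_derivative_add has_derivative_scaleR_left assms)
qed

lemma coordinate_product_has_derivative:
  "((\<lambda>x::real^4. x$i * x$j) has_derivative (\<lambda>h. h$i * y$j + y$i * h$j)) (at y)"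
proof -
  have nth: "((\<lambda>x::real^4. x$k) has_derivative (\<lambda>h. h$k)) (at y)" for k
    by (rule bounded_linear_imp_has_derivative[OF bounded_linear_vec_nth])
  show ?thesis
    using has_derivative_mult[OF nth[of i] nth[of j]] by (simp add: algebra_simps)
qed

lemma base_quad_has_derivative: "(base_quad has_derivative base_quad_diff y) (at y)"
  unfolding base_quad_def[abs_def] power2_eq_square
  by (rule has_derivative_eq_rhs[OF vector3_has_derivative],
      (rule has_derivative_add has_derivative_diff has_derivative_mult_right
        coordinate_product_has_derivative)+)
     (simp add: base_quad_diff_def vec3_eq_iff fun_eq_iff algebra_simps)

lemma fibre_quad_has_derivative: "(fibre_quad has_derivative fibre_quad_diff y) (at y)"
  unfolding fibre_quad_def[abs_def] power2_eq_square
  by (rule has_derivative_eq_rhs[OF vector3_has_derivative],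
      (rule has_derivative_add has_derivative_diff has_derivative_mult_right has_derivative_minus
        coordinate_product_has_derivative)+)
     (simp add: fibre_quad_diff_def vec3_eq_iff fun_eq_iff algebra_simps)

definition dFmap :: "real \<Rightarrow> real^4 \<Rightarrow> real^4 \<Rightarrow> (real^3) \<times> (real^3)" where
  "dFmap c y w = ((sqrt c / 4) *\<^sub>R base_quad_diff y w, (c / 4) *\<^sub>R fibre_quad_diff y w)"

lemma Fmap_has_derivative:
  assumes "c > 0"
  shows "(Fmap c has_derivative dFmap c y) (at y)"
proof -
  have "Fmap c = (\<lambda>y. ((sqrt c / 4) *\<^sub>R base_quad y, (c / 4) *\<^sub>R fibre_quad y))"
    using Fmap_quadratic[OF assms] by (simp add: fun_eq_iff)
  then show ?thesis
    unfolding dFmap_def[abs_def]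
    by (simp only:) (intro has_derivative_Pair has_derivative_scaleR_right
        base_quad_has_derivative fibre_quad_has_derivative)
qed

section \<open>F is an isometric immersion\<close>

lemma Fmap_in_T1H2:
  assumes c: "c > 0" and y: "y \<in> AdS (c / 4)"
  shows "Fmap c y \<in> T1H2 c"
proof -
  have L: "mink4 y y = -4/c" using y by (simp add: AdS_def)
  have "base_quad y $ 3 + mink4 y y = 2 * ((y$1)^2 + (y$2)^2)"
    by (simp add: base_quad_def mink4_def power2_eq_square)
  moreover have "mink4 y y < 0" using L c by simp
  moreover have "0 \<le> (y$1)^2 + (y$2)^2" by simp
  ultimately have "base_quad y $ 3 > 0" by (smt (verit))
  moreover have "sqrt c * sqrt c = c" using c by simp
  ultimately show ?thesis
    using c unfolding Fmap_quadratic[OF c] T1H2_def H2_def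
    by (simp add: quad_identities L power2_eq_square field_simps)
qed

lemma Fmap_tangent:
  assumes c: "c > 0" and y: "y \<in> AdS (c / 4)" and w: "w \<in> TanAdS y"
  shows "T1H2_tangent (fst (Fmap c y)) (snd (Fmap c y)) (dFmap c y w)"
  using w unfolding Fmap_quadratic[OF c] dFmap_def T1H2_tangent_def TanAdS_def
  by (simp add: quad_identities mink3_sym[of "fibre_quad_diff y w"])

lemma Fmap_isometric:
  assumes c: "c > 0" and y: "y \<in> AdS (c / 4)" and w1: "w1 \<in> TanAdS y" and w2: "w2 \<in> TanAdS y"
  shows "T1H2_metric c (snd (Fmap c y)) (dFmap c y w1) (dFmap c y w2) = mink4 w1 w2"
proof -
  have L: "mink4 y y = -4/c" using y by (simp add: AdS_def)
  have t: "mink4 y w1 = 0" "mink4 y w2 = 0" using w1 w2 by (simp_all add: TanAdS_def)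
  have ss: "sqrt c * (sqrt c * t) = c * t" for t
    using c by (simp add: mult.assoc[symmetric])
  define T1 T2 where "T1 = fibre_pairing y w1" and "T2 = fibre_pairing y w2"
  have Xe: "mink3 ((sqrt c / 4) *\<^sub>R base_quad_diff y w) ((c / 4) *\<^sub>R fibre_quad y)
      = - sqrt c / 2 * fibre_pairing y w" for w
    using c by (simp add: base_diff_fibre L)
  have "T1H2_metric c (snd (Fmap c y)) (dFmap c y w1) (dFmap c y w2)
      = c / 16 * (mink3 (base_quad_diff y w1) (base_quad_diff y w2)
                  - mink3 (fibre_quad_diff y w1) (fibre_quad_diff y w2)) - c / 4 * T1 * T2"
    using c unfolding Fmap_quadratic[OF c] dFmap_def T1H2_metric_def snd_conv fst_conv Xe
    by (simp add: T1_def T2_def field_simps ss)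
  also have "\<dots> = mink4 w1 w2"
    using c by (simp add: diff_metric t L T1_def T2_def field_simps)
  finally show ?thesis .
qed

theorem theorem2:
  fixes c r :: real
  assumes "c > 0" and "r \<ge> 0"
  shows "\<forall>y \<in> AdS (c / 4).
           Fmap c y \<in> T1H2 c \<and>
           Fmap c differentiable (at y) \<and>
           inj_on (frechet_derivative (Fmap c) (at y)) (TanAdS y) \<and>
           (\<forall>W1 \<in> TanAdS y. \<forall>W2 \<in> TanAdS y.
              hmr_value c (log 2 c) r (Fmap c y)
                (frechet_derivative (Fmap c) (at y) W1)
                (frechet_derivative (Fmap c) (at y) W2)
                (mink4 W1 W2))"
proof
  fix y assume y: "y \<in> AdS (c / 4)"
  have c: "c > 0" by (rule assms(1))
  have DF: "frechet_derivative (Fmap c) (at y) = dFmap c y"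
    by (rule frechet_derivative_at[OF Fmap_has_derivative[OF c], symmetric])
  obtain p e where pe: "Fmap c y = (p, e)" by fastforce
  have pullback: "mink4 w1 w2 = T1H2_metric c e (dFmap c y w1) (dFmap c y w2)"
    if "w1 \<in> TanAdS y" "w2 \<in> TanAdS y" for w1 w2
    using Fmap_isometric[OF c y that] pe by simp
  have nonnull: "mink4 y y \<noteq> 0" using y c by (simp add: AdS_def)
  show "Fmap c y \<in> T1H2 c \<and> Fmap c differentiable (at y) \<and>
      inj_on (frechet_derivative (Fmap c) (at y)) (TanAdS y) \<and>
      (\<forall>W1 \<in> TanAdS y. \<forall>W2 \<in> TanAdS y. hmr_value c (log 2 c) r (Fmap c y)
         (frechet_derivative (Fmap c) (at y) W1) (frechet_derivative (Fmap c) (at y) W2) (mink4 W1 W2))"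
    unfolding DF
  proof (intro conjI ballI)
    show "Fmap c y \<in> T1H2 c" by (rule Fmap_in_T1H2[OF c y])
    show "Fmap c differentiable (at y)" by (rule differentiableI[OF Fmap_has_derivative[OF c]])
    show "inj_on (dFmap c y) (TanAdS y)"
      by (rule inj_on_if_pullback[where B = "T1H2_metric c e", OF nonnull pullback])
    fix w1 w2 assume w: "w1 \<in> TanAdS y" "w2 \<in> TanAdS y"
    have "hmr_value c (log 2 c) r (p, e) (dFmap c y w1) (dFmap c y w2)
        (T1H2_metric c e (dFmap c y w1) (dFmap c y w2))"
      using hmr_value_T1H2[OF c] Fmap_in_T1H2[OF c y] Fmap_tangent[OF c y] w pe by simp
    then show "hmr_value c (log 2 c) r (Fmap c y) (dFmap c y w1) (dFmap c y w2) (mink4 w1 w2)"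
      using pullback[OF w] pe by simp
  qed
qed

end
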